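(* Let $b\ge2$ be an integer, $\lambda\in(1/b,1)$, $k\in\mathbb{Z}_+$, let $\tau$ be a $\mathbb{Z}$-periodic $C^k$ function, let $p\ge2$ be an integer with $\gcd(p,b)=1$, and let $\tilde\tau(x)=\tau(px)$. Then (i) $t\in\mathbb{R}$ is a $C^k$-regulating period of $W^\tau$ if and only if $t/p$ is a $C^k$-regulating period of $W^{\tilde\tau}$; (ii) $\tau$ satisfies condition (H) if and only if $\tilde\tau$ satisfies condition (H).
   Context: $W^\psi(x)=\sum_{n\ge0}\lambda^n\psi(b^nx)$; $t$ is a $C^k$-regulating period of $W^\psi$ if $x\mapsto W^\psi(x+t)-W^\psi(x)$ is $C^k$. With $\Sigma=\{0,\dots,b-1\}^{\mathbb{Z}_+}$, $\gamma=1/(b\lambda)$ and $Y^\psi(x,\mathbf{j})=-\sum_{n\ge1}\gamma^n\psi'\!\left(\frac{x}{b^n}+\frac{j_1}{b^n}+\frac{j_2}{b^{n-1}}+\cdots+\frac{j_n}{b}\right)$, $\psi$ satisfies condition (H) if $Y^\psi(\cdot,\mathbf{j})-Y^\psi(\cdot,\mathbf{i})\not\equiv0$ for all $\mathbf{i}\ne\mathbf{j}\in\Sigma$. *)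

theory Defs
  imports "HOL-Analysis.Analysis"
begin

definition Ck :: "nat \<Rightarrow> (real \<Rightarrow> real) \<Rightarrow> bool" where
  "Ck k f \<longleftrightarrow> (\<forall>j<k. \<forall>x. ((deriv ^^ j) f) differentiable (at x))
                 \<and> continuous_on UNIV ((deriv ^^ k) f)"

definition W :: "nat \<Rightarrow> real \<Rightarrow> (real \<Rightarrow> real) \<Rightarrow> real \<Rightarrow> real" where
  "W b lam psi x = (\<Sum>n. lam ^ n * psi (real b ^ n * x))"

definition regulating_period ::
  "nat \<Rightarrow> real \<Rightarrow> nat \<Rightarrow> (real \<Rightarrow> real) \<Rightarrow> real \<Rightarrow> bool" where
  "regulating_period b lam k psi t \<longleftrightarrow> Ck k (\<lambda>x. W b lam psi (x + t) - W b lam psi x)"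

text \<open>Symbolic space Sigma = {0,...,b-1}^{Z_+}; a sequence j_1, j_2, ... is
  represented by j :: nat => nat with j_i = j (i - 1).\<close>
definition Sigma_b :: "nat \<Rightarrow> (nat \<Rightarrow> nat) set" where
  "Sigma_b b = {j. \<forall>n. j n < b}"

definition Y :: "nat \<Rightarrow> real \<Rightarrow> (real \<Rightarrow> real) \<Rightarrow> real \<Rightarrow> (nat \<Rightarrow> nat) \<Rightarrow> real" where
  "Y b lam psi x j = - (\<Sum>m. (1 / (real b * lam)) ^ (Suc m) *
      deriv psi (x / real b ^ (Suc m) + (\<Sum>i<Suc m. real (j i) / real b ^ (Suc m - i))))"

definition condition_H :: "nat \<Rightarrow> real \<Rightarrow> (real \<Rightarrow> real) \<Rightarrow> bool" where
  "condition_H b lam psi \<longleftrightarrow>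
     (\<forall>i\<in>Sigma_b b. \<forall>j\<in>Sigma_b b. i \<noteq> j \<longrightarrow> (\<exists>x. Y b lam psi x j - Y b lam psi x i \<noteq> 0))"

end

theory Submission
  imports Defs "HOL-Number_Theory.Cong"
begin

text \<open>Write \<open>\<tau>\<^sub>p(x) = \<tau>(p x)\<close>. Since \<open>W(\<tau>\<^sub>p)(x) = W(\<tau>)(p x)\<close>, the difference function of
  \<open>W(\<tau>\<^sub>p)\<close> for the period \<open>t/p\<close> is that of \<open>W(\<tau>)\<close> for \<open>t\<close> composed with \<open>x \<mapsto> p x\<close>,
  and being \<open>C\<^sup>k\<close> is invariant under such rescalings.

  For (H), read a word \<open>j\<^sub>1 \<dots> j\<^sub>n\<close> as the integer \<open>N\<^sub>n(j) = \<Sum>\<^sub>i j\<^sub>i\<^sub>+\<^sub>1 b\<^sup>i\<close>, so that the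
  \<open>n\<close>-th term of \<open>Y(\<psi>)(x,j)\<close> evaluates \<open>\<psi>'\<close> at \<open>(x + N\<^sub>n(j))/b\<^sup>n\<close>. Viewing \<open>\<Sigma>\<close> as the
  \<open>b\<close>-adic integers, multiplication by the unit \<open>p\<close> is a bijection \<open>\<sigma>\<close> of \<open>\<Sigma>\<close> with
  \<open>N\<^sub>n(\<sigma> j) = p N\<^sub>n(j) mod b\<^sup>n\<close>. As \<open>\<tau>'\<close> is 1-periodic, this gives
  \<open>Y(\<tau>\<^sub>p)(x,j) = p Y(\<tau>)(p x, \<sigma> j)\<close>, and \<open>\<sigma>\<close> transports condition (H).\<close>

definition prefix_value :: "nat \<Rightarrow> (nat \<Rightarrow> nat) \<Rightarrow> nat \<Rightarrow> nat" where
  "prefix_value b j n = (\<Sum>i<n. j i * b ^ i)"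

text \<open>The digits of the \<open>b\<close>-adic integer \<open>p \<cdot> \<Sum>\<^sub>i j i b\<^sup>i\<close>.\<close>
definition mult_digits :: "nat \<Rightarrow> nat \<Rightarrow> (nat \<Rightarrow> nat) \<Rightarrow> nat \<Rightarrow> nat" where
  "mult_digits b p j i = (p * prefix_value b j (Suc i) div b ^ i) mod b"

lemma prefix_value_Suc: "prefix_value b j (Suc n) = prefix_value b j n + j n * b ^ n"
  by (simp add: prefix_value_def)

lemma prefix_value_less: "j \<in> Sigma_b b \<Longrightarrow> prefix_value b j n < b ^ n"
proof (induction n)
  case 0
  then show ?case by (simp add: prefix_value_def)
next
  case (Suc n)
  have "j n + 1 \<le> b" using Suc.prems by (simp add: Sigma_b_def Suc_le_eq)
  then have "(j n + 1) * b ^ n \<le> b * b ^ n" by (rule mult_right_mono) simp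
  then show ?case using Suc by (simp add: prefix_value_Suc algebra_simps)
qed

lemma digits_eqI:
  assumes "b > 0" "\<And>n. prefix_value b i n = prefix_value b j n"
  shows "i = j"
proof
  fix n
  have "i n * b ^ n = j n * b ^ n"
    using assms(2)[of "Suc n"] assms(2)[of n] by (simp add: prefix_value_Suc)
  then show "i n = j n" using assms(1) by simp
qed

lemma mult_digits_in_Sigma_b: "b > 0 \<Longrightarrow> mult_digits b p j \<in> Sigma_b b"
  by (simp add: Sigma_b_def mult_digits_def)

lemma prefix_value_mult_digits:
  assumes "b > 0"
  shows "prefix_value b (mult_digits b p j) n = p * prefix_value b j n mod b ^ n"
proof (induction n)
  case 0
  then show ?case by (simp add: prefix_value_def)
next
  case (Suc n)
  define X where "X = p * prefix_value b j (Suc n)"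
  have X_mod: "X mod b ^ n = p * prefix_value b j n mod b ^ n"
    unfolding X_def prefix_value_Suc distrib_left mult.assoc[symmetric] by simp
  have "prefix_value b (mult_digits b p j) (Suc n)
      = prefix_value b (mult_digits b p j) n + mult_digits b p j n * b ^ n"
    by (rule prefix_value_Suc)
  also have "\<dots> = X mod b ^ n + b ^ n * (X div b ^ n mod b)"
    using Suc.IH X_mod by (simp add: mult_digits_def[of b p j n] X_def mult.commute)
  also have "\<dots> = X mod (b ^ n * b)" by (simp add: mod_mult2_eq)
  finally show ?case by (simp add: X_def mult.commute)
qed

lemma cong_mult_cancel_less:
  fixes m p x y :: nat
  assumes "coprime p m" "[p * x = p * y] (mod m)" "x < m" "y < m"
  shows "x = y"
  using assms cong_mult_lcancel_nat cong_less_modulus_unique_nat by blast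

lemma inj_on_mult_digits:
  assumes "b > 0" "coprime p b"
  shows "inj_on (mult_digits b p) (Sigma_b b)"
proof
  fix i j assume i: "i \<in> Sigma_b b" and j: "j \<in> Sigma_b b"
    and eq: "mult_digits b p i = mult_digits b p j"
  show "i = j"
  proof (rule digits_eqI[OF assms(1)])
    fix n
    have "[p * prefix_value b i n = p * prefix_value b j n] (mod b ^ n)"
      using eq prefix_value_mult_digits[OF assms(1), of p] by (metis cong_def)
    then show "prefix_value b i n = prefix_value b j n"
      using cong_mult_cancel_less assms(2) prefix_value_less[OF i] prefix_value_less[OF j]
      by (metis coprime_power_right_iff)
  qed
qed

lemma compatible_residues_prefix_values:
  assumes "b > 0" "\<And>n. u n < b ^ n" "\<And>n. u (Suc n) mod b ^ n = u n"
  obtains j where "j \<in> Sigma_b b" "\<And>n. prefix_value b j n = u n"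
proof
  define j where "j i = (u (Suc i) div b ^ i) mod b" for i
  show "j \<in> Sigma_b b" using assms(1) by (simp add: Sigma_b_def j_def)
  show "prefix_value b j n = u n" for n
  proof (induction n)
    case 0
    then show ?case using assms(2)[of 0] by (simp add: prefix_value_def)
  next
    case (Suc n)
    have "u (Suc n) = u (Suc n) mod (b ^ n * b)"
      using assms(2)[of "Suc n"] by (simp add: mult.commute)
    also have "\<dots> = b ^ n * j n + u n"
      using assms(3)[of n] by (simp add: mod_mult2_eq j_def)
    finally show ?case using Suc by (simp add: prefix_value_Suc mult.commute)
  qed
qed

lemma mult_digits_surj:
  assumes "b > 0" "coprime p b" "j' \<in> Sigma_b b"
  obtains j where "j \<in> Sigma_b b" "mult_digits b p j = j'"
proof -
  have coprime_pow: "coprime p (b ^ n)" for n using assms(2) by simp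
  have "\<forall>n. \<exists>x. [p * x = 1] (mod b ^ n)"
    using cong_solve_coprime_nat[OF coprime_pow] by simp
  then obtain q where q: "\<And>n. [p * q n = 1] (mod b ^ n)" by metis
  define u where "u n = (q n * prefix_value b j' n) mod b ^ n" for n
  have u_less: "u n < b ^ n" for n using assms(1) by (simp add: u_def)
  have u_cong: "[p * u n = prefix_value b j' n] (mod b ^ n)" for n
  proof -
    have "[p * u n = (p * q n) * prefix_value b j' n] (mod b ^ n)"
      by (simp add: u_def cong_def mod_mult_right_eq mult.assoc)
    also have "[(p * q n) * prefix_value b j' n = 1 * prefix_value b j' n] (mod b ^ n)"
      by (rule cong_mult[OF q cong_refl])
    finally show ?thesis by simp
  qed
  have u_compatible: "u (Suc n) mod b ^ n = u n" for n
  proof (rule cong_mult_cancel_less[OF coprime_pow])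
    have "[p * (u (Suc n) mod b ^ n) = p * u (Suc n)] (mod b ^ n)"
      by (simp add: cong_def mod_mult_right_eq)
    also have "[p * u (Suc n) = prefix_value b j' (Suc n)] (mod b ^ n)"
      using u_cong[of "Suc n"] by (rule cong_dvd_modulus_nat) (simp add: le_imp_power_dvd)
    also have "[prefix_value b j' (Suc n) = prefix_value b j' n] (mod b ^ n)"
      by (simp add: prefix_value_Suc cong_def)
    also have "[prefix_value b j' n = p * u n] (mod b ^ n)" using u_cong cong_sym by blast
    finally show "[p * (u (Suc n) mod b ^ n) = p * u n] (mod b ^ n)" .
  qed (use assms(1) u_less in auto)
  obtain j where j: "j \<in> Sigma_b b" "\<And>n. prefix_value b j n = u n"
    using compatible_residues_prefix_values[OF assms(1) u_less u_compatible] by blast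
  have "mult_digits b p j = j'"
  proof (rule digits_eqI[OF assms(1)])
    fix n
    have "prefix_value b (mult_digits b p j) n = p * u n mod b ^ n"
      using prefix_value_mult_digits[OF assms(1)] j(2) by simp
    also have "\<dots> = prefix_value b j' n"
      using u_cong[of n] prefix_value_less[OF assms(3)] by (simp add: cong_def)
    finally show "prefix_value b (mult_digits b p j) n = prefix_value b j' n" .
  qed
  with j(1) that show ?thesis by blast
qed

lemma bij_betw_mult_digits:
  assumes "b > 0" "coprime p b"
  shows "bij_betw (mult_digits b p) (Sigma_b b) (Sigma_b b)"
  unfolding bij_betw_def
proof
  show "inj_on (mult_digits b p) (Sigma_b b)" by (rule inj_on_mult_digits[OF assms])
  show "mult_digits b p ` Sigma_b b = Sigma_b b"
    using mult_digits_in_Sigma_b[OF assms(1)] mult_digits_surj[OF assms] by blast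
qed

lemma has_real_derivative_compose_scale:
  assumes "g differentiable (at (c * x))"
  shows "((\<lambda>x. a * g (c * x)) has_real_derivative a * (deriv g (c * x) * c)) (at x)"
proof -
  have "(g has_real_derivative deriv g (c * x)) (at (c * x))"
    using assms by (simp add: DERIV_deriv_iff_real_differentiable)
  from DERIV_cmult[OF DERIV_chain2[OF this DERIV_cmult_Id]] show ?thesis .
qed

lemma deriv_compose_scale:
  fixes g :: "real \<Rightarrow> real"
  assumes "g differentiable (at (c * x))"
  shows "deriv (\<lambda>x. g (c * x)) x = c * deriv g (c * x)"
  using DERIV_imp_deriv[OF has_real_derivative_compose_scale[OF assms, of 1]] by simp

lemma higher_deriv_compose_scale:
  assumes "Ck k g" "j \<le> k"
  shows "(deriv ^^ j) (\<lambda>x. g (c * x)) = (\<lambda>x. c ^ j * (deriv ^^ j) g (c * x))"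
  using assms(2)
proof (induction j)
  case 0
  then show ?case by simp
next
  case (Suc j)
  have "(deriv ^^ Suc j) (\<lambda>x. g (c * x)) = deriv (\<lambda>x. c ^ j * (deriv ^^ j) g (c * x))"
    using Suc by simp
  also have "\<dots> = (\<lambda>x. c ^ Suc j * (deriv ^^ Suc j) g (c * x))"
  proof
    fix x
    have "((deriv ^^ j) g) differentiable (at (c * x))"
      using assms(1) Suc.prems by (simp add: Ck_def)
    from DERIV_imp_deriv[OF has_real_derivative_compose_scale[OF this, of "c ^ j"]]
    show "deriv (\<lambda>x. c ^ j * (deriv ^^ j) g (c * x)) x = c ^ Suc j * (deriv ^^ Suc j) g (c * x)"
      by (simp add: algebra_simps)
  qed
  finally show ?case .
qed

lemma Ck_compose_scale:
  assumes "Ck k g"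
  shows "Ck k (\<lambda>x. g (c * x))"
  unfolding Ck_def
proof (intro conjI allI impI)
  fix j x assume "j < k"
  then have "((deriv ^^ j) g) differentiable (at (c * x))" using assms by (simp add: Ck_def)
  then have "(\<lambda>x. c ^ j * (deriv ^^ j) g (c * x)) differentiable (at x)"
    using has_real_derivative_compose_scale real_differentiable_def by blast
  then show "(deriv ^^ j) (\<lambda>x. g (c * x)) differentiable at x"
    using higher_deriv_compose_scale[OF assms, of j c] \<open>j < k\<close> by simp
next
  have "continuous_on UNIV ((deriv ^^ k) g)" using assms by (simp add: Ck_def)
  then have "continuous_on UNIV (\<lambda>x. c ^ k * (deriv ^^ k) g (c * x))"
    by (auto intro!: continuous_intros intro: continuous_on_compose2)
  then show "continuous_on UNIV ((deriv ^^ k) (\<lambda>x. g (c * x)))"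
    using higher_deriv_compose_scale[OF assms, of k c] by simp
qed

lemma Ck_compose_scale_iff:
  assumes "c \<noteq> 0"
  shows "Ck k (\<lambda>x. g (c * x)) \<longleftrightarrow> Ck k g"
proof
  assume "Ck k (\<lambda>x. g (c * x))"
  from Ck_compose_scale[OF this, of "1 / c"] show "Ck k g" using assms by simp
qed (rule Ck_compose_scale)

lemma Ck_imp_C1:
  assumes "Ck k f" "k \<ge> 1"
  shows "\<And>x. f differentiable (at x)" and "continuous_on UNIV (deriv f)"
proof -
  have diff: "(deriv ^^ j) f differentiable (at x)" if "j < k" for j x
    using assms(1) that by (simp add: Ck_def)
  show "f differentiable (at x)" for x
    using diff[of 0] assms(2) by simp
  show "continuous_on UNIV (deriv f)"
  proof (cases "k = 1")
    case True
    then show ?thesis using assms(1) by (simp add: Ck_def)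
  next
    case False
    then have "deriv f differentiable_on UNIV"
      using diff[of 1] assms(2) by (simp add: differentiable_on_def)
    then show ?thesis by (rule differentiable_imp_continuous_on)
  qed
qed

lemma W_compose_scale: "W b lam (\<lambda>x. g (c * x)) y = W b lam g (c * y)"
  unfolding W_def by (simp add: mult.left_commute)

lemma regulating_period_compose_scale:
  assumes "c \<noteq> 0"
  shows "regulating_period b lam k (\<lambda>x. g (c * x)) (t / c) \<longleftrightarrow> regulating_period b lam k g t"
proof -
  define d where "d x = W b lam g (x + t) - W b lam g x" for x
  have "(\<lambda>x. W b lam (\<lambda>x. g (c * x)) (x + t / c) - W b lam (\<lambda>x. g (c * x)) x)
      = (\<lambda>x. d (c * x))"
    using assms by (simp add: W_compose_scale d_def distrib_left)
  then show ?thesis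
    unfolding regulating_period_def d_def[symmetric] using Ck_compose_scale_iff[OF assms]
    by (simp add: d_def)
qed

lemma periodic_int:
  assumes "\<And>x. f (x + 1) = f x"
  shows "f (x + real_of_int K) = f x"
proof -
  have nat: "f (y + real n) = f y" for y n
  proof (induction n)
    case (Suc n)
    have "f (y + real (Suc n)) = f (y + real n + 1)" by (simp add: algebra_simps)
    then show ?case using assms Suc.IH by simp
  qed simp
  show ?thesis
  proof (cases "K \<ge> 0")
    case True
    then show ?thesis using nat[of x "nat K"] by simp
  next
    case False
    then show ?thesis using nat[of "x + real_of_int K" "nat (- K)"] by simp
  qed
qed

lemma deriv_periodic:
  assumes "\<And>x. f (x + 1) = f x"
  shows "deriv f (x + 1) = deriv f x"
  unfolding deriv_def DERIV_shift assms ..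

lemma periodic_continuous_bounded:
  fixes f :: "real \<Rightarrow> real"
  assumes "\<And>x. f (x + 1) = f x" "continuous_on UNIV f"
  obtains B where "\<And>x. \<bar>f x\<bar> \<le> B"
proof -
  have "compact (f ` {0..1})"
    using assms(2) by (blast intro: compact_continuous_image continuous_on_subset)
  then obtain B where "\<forall>y\<in>f ` {0..1}. norm y \<le> B"
    using compact_imp_bounded bounded_iff by metis
  then have B: "\<And>y. y \<in> {0..1} \<Longrightarrow> \<bar>f y\<bar> \<le> B" by simp
  have "\<bar>f x\<bar> \<le> B" for x
  proof -
    have "f x = f (x - \<lfloor>x\<rfloor>)"
      using periodic_int[of f, OF assms(1), of "x - \<lfloor>x\<rfloor>" "\<lfloor>x\<rfloor>"] by simp
    moreover have "x - \<lfloor>x\<rfloor> \<in> {0..1}"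
      using floor_correct[of x] by simp linarith
    ultimately show ?thesis using B by simp
  qed
  then show ?thesis using that by blast
qed

lemma sum_digits_div_power:
  assumes "b > 0"
  shows "(\<Sum>i<n. real (j i) / real b ^ (n - i)) = real (prefix_value b j n) / real b ^ n"
proof -
  have "real (prefix_value b j n) / real b ^ n = (\<Sum>i<n. real (j i) * real b ^ i / real b ^ n)"
    unfolding prefix_value_def by (simp add: sum_divide_distrib)
  also have "\<dots> = (\<Sum>i<n. real (j i) / real b ^ (n - i))"
    using assms by (intro sum.cong) (simp_all add: power_diff)
  finally show ?thesis by simp
qed

text \<open>Multiplying \<open>(x + N)/b\<^sup>n\<close> by \<open>p\<close> gives \<open>(p x + (p N mod b\<^sup>n))/b\<^sup>n\<close> up to an integer,
  which the periodic \<open>\<tau>'\<close> does not see.\<close>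
lemma deriv_compose_scale_digits:
  fixes tau :: "real \<Rightarrow> real"
  assumes "b > 0" "\<And>x. tau differentiable (at x)" "\<And>x. tau (x + 1) = tau x"
  shows "deriv (\<lambda>x. tau (real p * x)) (x / real b ^ n + (\<Sum>i<n. real (j i) / real b ^ (n - i)))
    = real p * deriv tau (real p * x / real b ^ n + (\<Sum>i<n. real (mult_digits b p j i) / real b ^ (n - i)))"
proof -
  define N where "N = prefix_value b j n"
  define N' where "N' = prefix_value b (mult_digits b p j) n"
  define K where "K = p * N div b ^ n"
  have "p * N = K * b ^ n + N'"
    unfolding K_def N'_def prefix_value_mult_digits[OF assms(1)] N_def[symmetric]
    by (rule div_mult_mod_eq[symmetric])
  then have carry: "real p * real N = real K * real b ^ n + real N'"
    by (metis of_nat_add of_nat_mult of_nat_power)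
  have "real p * (x / real b ^ n + real N / real b ^ n)
      = real p * x / real b ^ n + (real p * real N) / real b ^ n"
    by (simp add: distrib_left)
  also have "\<dots> = real p * x / real b ^ n + real N' / real b ^ n + real K"
    unfolding carry using assms(1) by (simp add: add_divide_distrib)
  finally have shift: "real p * (x / real b ^ n + real N / real b ^ n)
      = real p * x / real b ^ n + real N' / real b ^ n + real_of_int (int K)"
    by simp
  have "deriv (\<lambda>x. tau (real p * x)) (x / real b ^ n + real N / real b ^ n)
      = real p * deriv tau (real p * (x / real b ^ n + real N / real b ^ n))"
    by (rule deriv_compose_scale[OF assms(2)])
  also have "\<dots> = real p * deriv tau (real p * x / real b ^ n + real N' / real b ^ n)"
    unfolding shift periodic_int[of "deriv tau", OF deriv_periodic[of tau, OF assms(3)]] ..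
  finally show ?thesis
    unfolding sum_digits_div_power[OF assms(1)] N_def N'_def .
qed

lemma summable_power_times_bounded:
  fixes \<gamma> :: real
  assumes "\<bar>\<gamma>\<bar> < 1" "\<And>m. \<bar>g m\<bar> \<le> B"
  shows "summable (\<lambda>m. \<gamma> ^ Suc m * g m)"
proof (rule summable_comparison_test')
  show "summable (\<lambda>m. B * \<bar>\<gamma>\<bar> ^ Suc m)"
    using assms(1) by (intro summable_mult summable_geometric summable_Suc_iff[THEN iffD2]) simp
  show "norm (\<gamma> ^ Suc m * g m) \<le> B * \<bar>\<gamma>\<bar> ^ Suc m" for m
    using mult_right_mono[OF assms(2)[of m], of "\<bar>\<gamma>\<bar> ^ Suc m"]
    by (simp add: abs_mult power_abs mult.commute)
qed

text \<open>The bound on \<open>\<tau>'\<close> only serves summability: \<open>suminf\<close> of a divergent series is an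
  unspecified value, which need not commute with the factor \<open>p\<close>.\<close>
lemma Y_compose_scale:
  fixes tau :: "real \<Rightarrow> real"
  assumes "b > 0" "\<bar>1 / (real b * lam)\<bar> < 1"
    and "\<And>x. tau differentiable (at x)" "\<And>x. tau (x + 1) = tau x" "\<And>x. \<bar>deriv tau x\<bar> \<le> B"
  shows "Y b lam (\<lambda>x. tau (real p * x)) x j = real p * Y b lam tau (real p * x) (mult_digits b p j)"
proof -
  have summable: "summable (\<lambda>m. (1 / (real b * lam)) ^ Suc m * deriv tau (real p * x / real b ^ Suc m
      + (\<Sum>i<Suc m. real (mult_digits b p j i) / real b ^ (Suc m - i))))"
    using assms(5) by (rule summable_power_times_bounded[OF assms(2)])
  have summand: "(1 / (real b * lam)) ^ Suc m * deriv (\<lambda>x. tau (real p * x))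
      (x / real b ^ Suc m + (\<Sum>i<Suc m. real (j i) / real b ^ (Suc m - i)))
    = real p * ((1 / (real b * lam)) ^ Suc m * deriv tau (real p * x / real b ^ Suc m
      + (\<Sum>i<Suc m. real (mult_digits b p j i) / real b ^ (Suc m - i))))" for m
    unfolding deriv_compose_scale_digits[OF assms(1,3,4)] by (rule mult.left_commute)
  show ?thesis
    unfolding Y_def summand suminf_mult[OF summable] by simp
qed

lemma condition_H_transfer:
  assumes "bij_betw s (Sigma_b b) (Sigma_b b)" "c \<noteq> 0"
    and "\<And>x j. Y b lam \<psi>' x j = c * Y b lam \<psi> (c * x) (s j)"
  shows "condition_H b lam \<psi>' \<longleftrightarrow> condition_H b lam \<psi>"
proof -
  have separates_iff: "(\<exists>x. Y b lam \<psi>' x j - Y b lam \<psi>' x i \<noteq> 0)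
      \<longleftrightarrow> (\<exists>y. Y b lam \<psi> y (s j) - Y b lam \<psi> y (s i) \<noteq> 0)" for i j
  proof
    assume "\<exists>x. Y b lam \<psi>' x j - Y b lam \<psi>' x i \<noteq> 0"
    then show "\<exists>y. Y b lam \<psi> y (s j) - Y b lam \<psi> y (s i) \<noteq> 0"
      by (auto simp: assms(3) simp flip: right_diff_distrib)
  next
    assume "\<exists>y. Y b lam \<psi> y (s j) - Y b lam \<psi> y (s i) \<noteq> 0"
    then obtain y where y: "Y b lam \<psi> y (s j) - Y b lam \<psi> y (s i) \<noteq> 0" ..
    have "Y b lam \<psi>' (y / c) j - Y b lam \<psi>' (y / c) i = c * (Y b lam \<psi> y (s j) - Y b lam \<psi> y (s i))"
      unfolding assms(3) using assms(2) by (simp add: right_diff_distrib)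
    then have "Y b lam \<psi>' (y / c) j - Y b lam \<psi>' (y / c) i \<noteq> 0"
      using y assms(2) by simp
    then show "\<exists>x. Y b lam \<psi>' x j - Y b lam \<psi>' x i \<noteq> 0" ..
  qed
  have inj: "inj_on s (Sigma_b b)" and onto: "s ` Sigma_b b = Sigma_b b"
    using assms(1) by (auto simp: bij_betw_def)
  show ?thesis
    unfolding condition_H_def separates_iff
  proof (intro iffI ballI impI)
    fix i j assume H: "\<forall>i\<in>Sigma_b b. \<forall>j\<in>Sigma_b b. i \<noteq> j \<longrightarrow> (\<exists>y. Y b lam \<psi> y (s j) - Y b lam \<psi> y (s i) \<noteq> 0)"
      and "i \<in> Sigma_b b" "j \<in> Sigma_b b" "i \<noteq> j"
    obtain i' j' where preimages: "i' \<in> Sigma_b b" "j' \<in> Sigma_b b" "i = s i'" "j = s j'"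
      using onto \<open>i \<in> Sigma_b b\<close> \<open>j \<in> Sigma_b b\<close> by (metis imageE)
    then have "i' \<noteq> j'" using \<open>i \<noteq> j\<close> by blast
    then show "\<exists>y. Y b lam \<psi> y j - Y b lam \<psi> y i \<noteq> 0" using H preimages by simp
  next
    fix i j assume "i \<in> Sigma_b b" "j \<in> Sigma_b b" "i \<noteq> j"
      and H: "\<forall>i\<in>Sigma_b b. \<forall>j\<in>Sigma_b b. i \<noteq> j \<longrightarrow> (\<exists>y. Y b lam \<psi> y j - Y b lam \<psi> y i \<noteq> 0)"
    moreover have "s i \<noteq> s j" "s i \<in> Sigma_b b" "s j \<in> Sigma_b b"
      using inj onto \<open>i \<in> Sigma_b b\<close> \<open>j \<in> Sigma_b b\<close> \<open>i \<noteq> j\<close> by (auto dest: inj_onD)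
    ultimately show "\<exists>y. Y b lam \<psi> y (s j) - Y b lam \<psi> y (s i) \<noteq> 0" by blast
  qed
qed

theorem mainTheorem9:
  fixes b p k :: nat and lam :: real and tau :: "real \<Rightarrow> real"
  assumes "b \<ge> 2" and "1 / real b < lam" and "lam < 1"
    and "k \<ge> 1"
    and "\<forall>x. tau (x + 1) = tau x"
    and "Ck k tau"
    and "p \<ge> 2" and "coprime p b"
  shows "(\<forall>t. regulating_period b lam k tau t \<longleftrightarrow>
               regulating_period b lam k (\<lambda>x. tau (real p * x)) (t / real p))
         \<and> (condition_H b lam tau \<longleftrightarrow> condition_H b lam (\<lambda>x. tau (real p * x)))"
proof
  have "real p \<noteq> 0" using assms(7) by simp
  then show "\<forall>t. regulating_period b lam k tau t \<longleftrightarrow>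
      regulating_period b lam k (\<lambda>x. tau (real p * x)) (t / real p)"
    using regulating_period_compose_scale by blast
next
  have b: "b > 0" using assms(1) by simp
  have periodic: "\<And>x. tau (x + 1) = tau x" using assms(5) by simp
  obtain B where "\<And>x. \<bar>deriv tau x\<bar> \<le> B"
    using periodic_continuous_bounded[of "deriv tau", OF deriv_periodic[of tau, OF periodic]]
      Ck_imp_C1(2)[OF assms(6,4)] by blast
  moreover have "\<bar>1 / (real b * lam)\<bar> < 1"
    using assms(2) b by (simp add: field_simps)
  ultimately have "Y b lam (\<lambda>x. tau (real p * x)) x j = real p * Y b lam tau (real p * x) (mult_digits b p j)"
    for x j
    using Y_compose_scale[OF b _ Ck_imp_C1(1)[OF assms(6,4)] periodic] by blast
  then have "condition_H b lam (\<lambda>x. tau (real p * x)) \<longleftrightarrow> condition_H b lam tau"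
    using assms(7) by (intro condition_H_transfer[OF bij_betw_mult_digits[OF b assms(8)]]) simp_all
  then show "condition_H b lam tau \<longleftrightarrow> condition_H b lam (\<lambda>x. tau (real p * x))" by blast
qed

end
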